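(* Let $G=(V,q)$ be a reversible connected graph with non-negative Ollivier curvature and $q_{\min}>0$. Then every bounded function $\phi:V\to\mathbb R$ with $\Delta\phi=0$ is constant.
   Context: A graph $G=(V,q)$ consists of a countable set $V$ and a function $q:V\times V\to[0,\infty)$ such that $\#\{y:q(x,y)>0\}<\infty$ for every $x\in V$; its Laplacian is $\Delta f(x)=\sum_y q(x,y)(f(y)-f(x))$. $G$ is reversible if there is $m:V\to(0,\infty)$ with $q(x,y)m(x)=q(y,x)m(y)$. $d$ is the combinatorial graph distance ($x\sim y$ iff $q(x,y)>0$), finite since $G$ is connected. $q_{\min}:=\inf\{q(x,y):q(x,y)>0\}$. Ollivier curvature: for $x\ne y$, $\nabla_{xy}f=(f(x)-f(y))/d(x,y)$, $\|\nabla f\|_\infty=\sup_{x\ne y}|\nabla_{xy}f|$, $\kappa(x,y)=\inf\{\nabla_{xy}\Delta f:\|\nabla f\|_\infty=1,\ \nabla_{yx}f=1\}$; non-negative means $\kappa(x,y)\ge0$ for all $x\ne y$. *)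

theory Defs
  imports "HOL-Analysis.Analysis"
begin

definition is_graph :: "('a::countable \<Rightarrow> 'a \<Rightarrow> real) \<Rightarrow> bool" where
  "is_graph q \<longleftrightarrow> (\<forall>x y. q x y \<ge> 0) \<and> (\<forall>x. finite {y. q x y > 0})"

definition laplacian :: "('a \<Rightarrow> 'a \<Rightarrow> real) \<Rightarrow> ('a \<Rightarrow> real) \<Rightarrow> 'a \<Rightarrow> real" where
  "laplacian q f x = (\<Sum>y\<in>{y. q x y > 0}. q x y * (f y - f x))"

definition reversible :: "('a \<Rightarrow> 'a \<Rightarrow> real) \<Rightarrow> bool" where
  "reversible q \<longleftrightarrow> (\<exists>m::'a \<Rightarrow> real. (\<forall>x. m x > 0) \<and> (\<forall>x y. q x y * m x = q y x * m y))"

definition edges :: "('a \<Rightarrow> 'a \<Rightarrow> real) \<Rightarrow> ('a \<times> 'a) set" where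
  "edges q = {(x, y). q x y > 0}"

definition connected_graph :: "('a \<Rightarrow> 'a \<Rightarrow> real) \<Rightarrow> bool" where
  "connected_graph q \<longleftrightarrow> (\<forall>x y. (x, y) \<in> (edges q)\<^sup>*)"

definition gdist :: "('a \<Rightarrow> 'a \<Rightarrow> real) \<Rightarrow> 'a \<Rightarrow> 'a \<Rightarrow> nat" where
  "gdist q x y = (LEAST n. (x, y) \<in> edges q ^^ n)"

definition q_min :: "('a \<Rightarrow> 'a \<Rightarrow> real) \<Rightarrow> real" where
  "q_min q = Inf {q x y | x y. q x y > 0}"

definition grad :: "('a \<Rightarrow> 'a \<Rightarrow> real) \<Rightarrow> ('a \<Rightarrow> real) \<Rightarrow> 'a \<Rightarrow> 'a \<Rightarrow> real" where
  "grad q f x y = (f x - f y) / real (gdist q x y)"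

definition grad_norm :: "('a \<Rightarrow> 'a \<Rightarrow> real) \<Rightarrow> ('a \<Rightarrow> real) \<Rightarrow> ereal" where
  "grad_norm q f = (SUP p\<in>{(x, y). x \<noteq> y}. ereal \<bar>grad q f (fst p) (snd p)\<bar>)"

definition ollivier_curvature :: "('a \<Rightarrow> 'a \<Rightarrow> real) \<Rightarrow> 'a \<Rightarrow> 'a \<Rightarrow> ereal" where
  "ollivier_curvature q x y =
     (INF f\<in>{f. grad_norm q f = 1 \<and> grad q f y x = 1}. ereal (grad q (laplacian q f) x y))"

definition nonneg_curvature :: "('a \<Rightarrow> 'a \<Rightarrow> real) \<Rightarrow> bool" where
  "nonneg_curvature q \<longleftrightarrow> (\<forall>x y. x \<noteq> y \<longrightarrow> ollivier_curvature q x y \<ge> 0)"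

end

theory Submission
  imports Defs
begin

(*
  Suppose f is bounded and harmonic with f x0 < f y0.  Perturb f to F1 = f - beta f^2 + eta d(x0, _)
  and F2 = f + beta f^2 - eta d(x0, _) and maximise F2 v - F1 u - l d(u, v) over pairs (u, v).
  The penalty eta d(x0, _) together with the finiteness of balls makes the maximum attained, and for
  suitable l, beta, eta it is attained at two distinct vertices x, y.  Non-negative Ollivier curvature,
  applied to a 1-Lipschitz envelope of cones squeezed between the two perturbations, yields
  Delta F2 (y) <= Delta F1 (x), i.e. beta Delta(f^2)(y) <= 2 eta Delta d(x0, _)(x0).  Maximality also
  produces an edge at y across which f jumps by a fixed amount, so Delta(f^2)(y) is bounded below by a
  multiple of q_min.  For eta small enough these two bounds are incompatible.
*)

lemma reversible_imp_sym_support: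
  assumes "reversible q" and "q x y > 0"
  shows "q y x > 0"
proof -
  from assms(1) obtain m where m_pos: "\<And>x. m x > 0" and balance: "\<And>x y. q x y * m x = q y x * m y"
    unfolding reversible_def by blast
  have "q y x * m y > 0"
    using assms(2) m_pos[of x] balance[of x y] by (metis mult_pos_pos)
  then show ?thesis
    using m_pos[of y] by (simp add: zero_less_mult_iff)
qed

subsection \<open>Laplacian calculus\<close>

lemma laplacian_add_scaled:
  "laplacian q (\<lambda>z. f z + c * g z) x = laplacian q f x + c * laplacian q g x"
proof -
  have "laplacian q (\<lambda>z. f z + c * g z) x
      = (\<Sum>y\<in>{y. q x y > 0}. q x y * (f y - f x) + c * (q x y * (g y - g x)))"
    unfolding laplacian_def by (rule sum.cong) (auto simp: algebra_simps)
  then show ?thesis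
    unfolding laplacian_def by (simp add: sum.distrib sum_distrib_left)
qed

lemma laplacian_affine:
  "laplacian q (\<lambda>z. (f z - c) / l) x = laplacian q f x / l"
  unfolding laplacian_def sum_divide_distrib
  by (rule sum.cong) (auto simp: diff_divide_distrib[symmetric])

lemma laplacian_le_of_touching:
  assumes "g x = h x" and "\<And>u. q x u > 0 \<Longrightarrow> g u \<le> h u"
  shows "laplacian q g x \<le> laplacian q h x"
  unfolding laplacian_def using assms by (intro sum_mono mult_left_mono) auto

lemma laplacian_square_harmonic:
  assumes "laplacian q f x = 0"
  shows "laplacian q (\<lambda>z. (f z)\<^sup>2) x = (\<Sum>y\<in>{y. q x y > 0}. q x y * (f y - f x)\<^sup>2)"
proof -
  have "laplacian q (\<lambda>z. (f z)\<^sup>2) x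
      = (\<Sum>y\<in>{y. q x y > 0}. q x y * (f y - f x)\<^sup>2 + 2 * f x * (q x y * (f y - f x)))"
    unfolding laplacian_def by (rule sum.cong) (auto simp: algebra_simps power2_eq_square)
  also have "\<dots> = (\<Sum>y\<in>{y. q x y > 0}. q x y * (f y - f x)\<^sup>2) + 2 * f x * laplacian q f x"
    unfolding laplacian_def by (simp add: sum.distrib sum_distrib_left)
  finally show ?thesis
    using assms by simp
qed

lemma laplacian_square_harmonic_nonneg:
  assumes "laplacian q f x = 0"
  shows "0 \<le> laplacian q (\<lambda>z. (f z)\<^sup>2) x"
  unfolding laplacian_square_harmonic[OF assms] by (rule sum_nonneg) auto

lemma laplacian_square_harmonic_ge_edge:
  assumes "is_graph q" and "laplacian q f x = 0" and "q x v > 0"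
  shows "q x v * (f v - f x)\<^sup>2 \<le> laplacian q (\<lambda>z. (f z)\<^sup>2) x"
  unfolding laplacian_square_harmonic[OF assms(2)]
  using assms(1,3) unfolding is_graph_def by (intro member_le_sum) auto

lemma q_min_le:
  assumes "q x y > 0"
  shows "q_min q \<le> q x y"
  unfolding q_min_def using assms by (intro cInf_lower bdd_belowI[of _ 0]) auto

lemma increment_lower_bound:
  fixes a b s t \<beta> \<eta> l B :: real
  assumes "\<bar>a\<bar> \<le> B" and "\<bar>b\<bar> \<le> B" and "\<beta> \<ge> 0" and "\<eta> \<ge> 0" and "\<eta> \<le> l / 2"
    and "t - s \<le> 1"
    and increment: "l \<le> (a + \<beta> * a\<^sup>2 - \<eta> * s) - (b + \<beta> * b\<^sup>2 - \<eta> * t)"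
  shows "l / (2 * (1 + 2 * \<beta> * B)) \<le> \<bar>a - b\<bar>"
proof -
  define c where "c = 1 + 2 * \<beta> * B"
  have "\<bar>\<beta> * (a + b)\<bar> \<le> \<beta> * (2 * B)"
    using assms(1-3) abs_triangle_ineq[of a b] by (simp add: abs_mult mult_left_mono)
  then have "\<bar>1 + \<beta> * (a + b)\<bar> \<le> c"
    unfolding c_def by linarith
  then have "(a - b) * (1 + \<beta> * (a + b)) \<le> \<bar>a - b\<bar> * c"
    by (metis abs_ge_self abs_mult abs_ge_zero mult_left_mono order_trans)
  moreover have "\<eta> * (t - s) \<le> \<eta>"
    using assms(4,6) by (simp add: mult_left_le)
  moreover have "(a + \<beta> * a\<^sup>2 - \<eta> * s) - (b + \<beta> * b\<^sup>2 - \<eta> * t)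
      = (a - b) * (1 + \<beta> * (a + b)) + \<eta> * (t - s)"
    by (simp add: algebra_simps power2_eq_square)
  ultimately have "l / 2 \<le> \<bar>a - b\<bar> * c"
    using increment assms(5) by linarith
  moreover have "c > 0"
    using assms(1,3) unfolding c_def by (simp add: add_pos_nonneg)
  ultimately have "(l / 2) / c \<le> \<bar>a - b\<bar>"
    by (simp add: pos_divide_le_eq)
  then show ?thesis
    unfolding c_def by simp
qed

subsection \<open>The combinatorial distance\<close>

(* Reversibility is used only through the symmetry of the support of q. *)
locale connected_symmetric_graph =
  fixes q :: "'a::countable \<Rightarrow> 'a \<Rightarrow> real"
  assumes graph: "is_graph q"
    and sym_support: "q x y > 0 \<Longrightarrow> q y x > 0"
    and connected: "connected_graph q"
begin

abbreviation d :: "'a \<Rightarrow> 'a \<Rightarrow> real" where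
  "d x y \<equiv> real (gdist q x y)"

lemma edges_relpow_sym: "(x, y) \<in> edges q ^^ n \<Longrightarrow> (y, x) \<in> edges q ^^ n"
proof (induction n arbitrary: y)
  case 0
  then show ?case by simp
next
  case (Suc n)
  then obtain z where "(x, z) \<in> edges q ^^ n" and "(z, y) \<in> edges q"
    by (blast elim: relpow_Suc_E)
  then have "(z, x) \<in> edges q ^^ n" and "(y, z) \<in> edges q"
    using Suc.IH sym_support by (auto simp: edges_def)
  then show ?case by (rule relpow_Suc_I2[rotated])
qed

lemma relpow_gdist: "(x, y) \<in> edges q ^^ gdist q x y"
proof -
  have "\<exists>n. (x, y) \<in> edges q ^^ n"
    using connected unfolding connected_graph_def rtrancl_power by blast
  then show ?thesis
    unfolding gdist_def by (rule LeastI_ex)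
qed

lemma gdist_le_relpow: "(x, y) \<in> edges q ^^ n \<Longrightarrow> gdist q x y \<le> n"
  unfolding gdist_def by (rule Least_le)

lemma gdist_self [simp]: "gdist q x x = 0"
  using gdist_le_relpow[of x x 0] by simp

lemma gdist_eq_0_iff: "gdist q x y = 0 \<longleftrightarrow> x = y"
  using relpow_gdist[of x y] by auto

lemma gdist_sym: "gdist q x y = gdist q y x"
  using gdist_le_relpow[OF edges_relpow_sym[OF relpow_gdist[of x y]]]
    gdist_le_relpow[OF edges_relpow_sym[OF relpow_gdist[of y x]]]
  by simp

lemma gdist_triangle: "gdist q x y \<le> gdist q x z + gdist q z y"
  using gdist_le_relpow[OF relpow_trans[OF relpow_gdist[of x z] relpow_gdist[of z y]]] .

lemma d_triangle: "d x y \<le> d x z + d z y"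
  unfolding of_nat_add[symmetric] of_nat_le_iff by (rule gdist_triangle)

lemma gdist_edge: "q x y > 0 \<Longrightarrow> gdist q x y \<le> 1"
  using gdist_le_relpow[of x y 1] by (simp add: edges_def)

lemma d_lipschitz: "\<bar>d z x - d z y\<bar> \<le> d x y"
  using d_triangle[of z x y] d_triangle[of z y x] gdist_sym[of x y] by simp

lemma exists_neighbour_closer:
  assumes "x \<noteq> y"
  obtains v where "q y v > 0" and "d x v + 1 \<le> d x y"
proof -
  obtain n where n: "gdist q x y = Suc n"
    using assms gdist_eq_0_iff by (cases "gdist q x y") auto
  then obtain v where v: "(x, v) \<in> edges q ^^ n" and "(v, y) \<in> edges q"
    using relpow_gdist[of x y] by (auto elim: relpow_Suc_E)
  then have "q y v > 0"
    using sym_support by (auto simp: edges_def)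
  moreover have "d x v + 1 \<le> d x y"
    using gdist_le_relpow[OF v] n by simp
  ultimately show ?thesis using that by blast
qed

lemma finite_gdist_ball: "finite {z. gdist q c z \<le> k}"
proof (induction k)
  case 0
  then show ?case using gdist_eq_0_iff by simp
next
  case (Suc k)
  have "{z. gdist q c z \<le> Suc k}
      \<subseteq> {z. gdist q c z \<le> k} \<union> (\<Union>w\<in>{z. gdist q c z \<le> k}. {z. q w z > 0})"
  proof
    fix z assume z: "z \<in> {z. gdist q c z \<le> Suc k}"
    show "z \<in> {z. gdist q c z \<le> k} \<union> (\<Union>w\<in>{z. gdist q c z \<le> k}. {z. q w z > 0})"
    proof (cases "gdist q c z \<le> k")
      case False
      then have "(c, z) \<in> edges q ^^ Suc k"
        using relpow_gdist[of c z] z by (simp add: le_Suc_eq)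
      then obtain w where "(c, w) \<in> edges q ^^ k" and "(w, z) \<in> edges q"
        by (blast elim: relpow_Suc_E)
      then show ?thesis
        using gdist_le_relpow by (auto simp: edges_def)
    qed simp
  qed
  moreover have "finite (\<Union>w\<in>{z. gdist q c z \<le> k}. {z. q w z > 0})"
    using Suc.IH graph unfolding is_graph_def by auto
  ultimately show ?case
    using Suc.IH by (meson finite_Un finite_subset)
qed

subsection \<open>Gradient norm and curvature of Lipschitz functions\<close>

lemma grad_norm_eq_1:
  assumes "x \<noteq> y" and lipschitz: "\<And>a b. \<bar>g a - g b\<bar> \<le> d a b" and "g y - g x = d x y"
  shows "grad_norm q g = 1"
  unfolding grad_norm_def
proof (rule antisym)
  show "(SUP p\<in>{(a, b). a \<noteq> b}. ereal \<bar>grad q g (fst p) (snd p)\<bar>) \<le> 1"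
  proof (rule SUP_least, safe)
    fix a b :: 'a assume "a \<noteq> b"
    then have "d a b \<ge> 1"
      using gdist_eq_0_iff[of a b] by simp
    then have "\<bar>grad q g a b\<bar> \<le> 1"
      using lipschitz[of a b] unfolding grad_def by (simp add: divide_le_eq_1)
    then show "ereal \<bar>grad q g (fst (a, b)) (snd (a, b))\<bar> \<le> 1"
      by simp
  qed
  have "grad q g y x = 1"
    using assms(1,3) gdist_sym[of x y] gdist_eq_0_iff[of x y] unfolding grad_def by simp
  then have "ereal \<bar>grad q g (fst (y, x)) (snd (y, x))\<bar> = 1"
    by simp
  moreover have "ereal \<bar>grad q g (fst (y, x)) (snd (y, x))\<bar>
      \<le> (SUP p\<in>{(a, b). a \<noteq> b}. ereal \<bar>grad q g (fst p) (snd p)\<bar>)"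
    using assms(1) by (intro SUP_upper) auto
  ultimately show "1 \<le> (SUP p\<in>{(a, b). a \<noteq> b}. ereal \<bar>grad q g (fst p) (snd p)\<bar>)"
    by (simp add: one_ereal_def)
qed

lemma ollivier_curvature_le:
  assumes "x \<noteq> y" and "\<And>a b. \<bar>g a - g b\<bar> \<le> d a b" and "g y - g x = d x y"
  shows "ollivier_curvature q x y \<le> ereal (grad q (laplacian q g) x y)"
proof -
  have "grad q g y x = 1"
    using assms(1,3) gdist_sym[of x y] gdist_eq_0_iff[of x y] unfolding grad_def by simp
  with grad_norm_eq_1[OF assms] show ?thesis
    unfolding ollivier_curvature_def by (intro INF_lower) auto
qed

subsection \<open>Cone envelopes and perturbed maximizers\<close>

definition cone_envelope :: "'a set \<Rightarrow> ('a \<Rightarrow> real) \<Rightarrow> 'a \<Rightarrow> real" where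
  "cone_envelope S b z = Max ((\<lambda>v. b v - d z v) ` S)"

context
  fixes S :: "'a set"
  assumes finite_S: "finite S" and S_nonempty: "S \<noteq> {}"
begin

lemma cone_envelope_ge: "v \<in> S \<Longrightarrow> b v - d z v \<le> cone_envelope S b z"
  unfolding cone_envelope_def using finite_S by (intro Max_ge) auto

lemma cone_envelope_attained: obtains v where "v \<in> S" and "cone_envelope S b z = b v - d z v"
proof -
  have "cone_envelope S b z \<in> (\<lambda>v. b v - d z v) ` S"
    unfolding cone_envelope_def using finite_S S_nonempty by (intro Max_in) auto
  then show ?thesis using that by blast
qed

lemma cone_envelope_lipschitz: "\<bar>cone_envelope S b x - cone_envelope S b y\<bar> \<le> d x y"
proof -
  have "cone_envelope S b x \<le> cone_envelope S b y + d x y" for x y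
  proof -
    obtain v where "v \<in> S" and "cone_envelope S b x = b v - d x v"
      by (rule cone_envelope_attained)
    moreover have "d y v \<le> d x y + d x v"
      using d_triangle[of y v x] gdist_sym[of x y] by simp
    ultimately show ?thesis
      using cone_envelope_ge[of v b y] by linarith
  qed
  from this[of x y] this[of y x] show ?thesis
    using gdist_sym[of x y] by linarith
qed

end

lemma pair_attains_max:
  fixes P :: "'a \<Rightarrow> 'a \<Rightarrow> real"
  assumes "\<eta> > 0" and coercive: "\<And>u v. P u v \<le> C - \<eta> * (d c u + d c v)"
  obtains x y where "\<And>u v. P u v \<le> P x y"
proof -
  define T where "T = {p. P c c \<le> P (fst p) (snd p)}"
  define R where "R = nat \<lceil>(C - P c c) / \<eta>\<rceil>"
  have in_ball: "gdist q c z \<le> R" if "\<eta> * d c z \<le> C - P c c" for z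
  proof -
    have "d c z \<le> (C - P c c) / \<eta>"
      using that \<open>\<eta> > 0\<close> by (simp add: pos_le_divide_eq mult.commute)
    then have "int (gdist q c z) \<le> \<lceil>(C - P c c) / \<eta>\<rceil>"
      using le_of_int_ceiling[of "(C - P c c) / \<eta>"] by linarith
    then show ?thesis
      unfolding R_def by (simp add: le_nat_iff)
  qed
  have "T \<subseteq> {z. gdist q c z \<le> R} \<times> {z. gdist q c z \<le> R}"
  proof safe
    fix u v assume "(u, v) \<in> T"
    then have "P c c \<le> P u v"
      unfolding T_def by simp
    with coercive[of u v] have "\<eta> * d c u + \<eta> * d c v \<le> C - P c c"
      by (simp only: distrib_left)
    moreover have "0 \<le> \<eta> * d c u" and "0 \<le> \<eta> * d c v"
      using \<open>\<eta> > 0\<close> by simp_all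
    ultimately show "gdist q c u \<le> R" and "gdist q c v \<le> R"
      by (intro in_ball; linarith)+
  qed
  then have "finite T"
    by (rule finite_subset) (intro finite_SigmaI finite_gdist_ball)
  moreover have "(c, c) \<in> T"
    unfolding T_def by simp
  ultimately have "Max ((\<lambda>p. P (fst p) (snd p)) ` T) \<in> (\<lambda>p. P (fst p) (snd p)) ` T"
    by (intro Max_in) auto
  then obtain x y where "(x, y) \<in> T" and max_eq: "Max ((\<lambda>p. P (fst p) (snd p)) ` T) = P x y"
    by auto
  have "P u v \<le> P x y" for u v
  proof (cases "(u, v) \<in> T")
    case True
    then have "P u v \<le> Max ((\<lambda>p. P (fst p) (snd p)) ` T)"
      using \<open>finite T\<close> by (intro Max_ge) force+
    then show ?thesis
      using max_eq by simp
  next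
    case False
    then show ?thesis
      using \<open>(x, y) \<in> T\<close> unfolding T_def by auto
  qed
  then show ?thesis
    using that by blast
qed

lemma maximizer_steep_edge:
  assumes "x \<noteq> y" and "l \<ge> 0"
    and maximizer: "\<And>u v. F2 v - F1 u - l * d u v \<le> F2 y - F1 x - l * d x y"
  obtains v where "q y v > 0" and "l \<le> F2 y - F2 v"
proof -
  obtain v where "q y v > 0" and closer: "d x v + 1 \<le> d x y"
    using exists_neighbour_closer[OF assms(1)] .
  have "l * 1 \<le> l * (d x y - d x v)"
    using closer \<open>l \<ge> 0\<close> by (intro mult_left_mono) auto
  also have "\<dots> \<le> F2 y - F2 v"
    using maximizer[of v x] by (simp add: algebra_simps)
  finally show ?thesis
    using that \<open>q y v > 0\<close> by simp
qed

lemma exists_perturbed_maximizer: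
  fixes f :: "'a \<Rightarrow> real" and x0 y0 :: 'a and \<beta> \<eta> l a B :: real
  defines "F1 \<equiv> \<lambda>z. f z + (- \<beta>) * (f z)\<^sup>2 + \<eta> * d x0 z"
    and "F2 \<equiv> \<lambda>z. f z + \<beta> * (f z)\<^sup>2 + (- \<eta>) * d x0 z"
  assumes bounded: "\<And>z. \<bar>f z\<bar> \<le> B" and "0 < a" and "a \<le> f y0 - f x0"
    and "\<beta> \<ge> 0" and "8 * \<beta> * B\<^sup>2 \<le> a" and "\<eta> > 0" and "4 * \<eta> * d x0 y0 \<le> a"
    and "l \<ge> 0" and "4 * l * d x0 y0 \<le> a"
  obtains x y where "x \<noteq> y" and "\<And>u v. F2 v - F1 u - l * d u v \<le> F2 y - F1 x - l * d x y"
proof -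
  define P where "P u v = F2 v - F1 u - l * d u v" for u v
  have square_le: "8 * (\<beta> * (f z)\<^sup>2) \<le> a" for z
  proof -
    have "(f z)\<^sup>2 \<le> B\<^sup>2"
      using bounded[of z] abs_ge_zero[of "f z"] by (simp add: power2_le_iff_abs_le)
    then have "8 * \<beta> * (f z)\<^sup>2 \<le> 8 * \<beta> * B\<^sup>2"
      using \<open>\<beta> \<ge> 0\<close> by (intro mult_left_mono) auto
    then show ?thesis
      using \<open>8 * \<beta> * B\<^sup>2 \<le> a\<close> by simp
  qed
  have "P u v \<le> (2 * B + a / 4) - \<eta> * (d x0 u + d x0 v)" for u v
  proof -
    have "P u v = f v - f u + \<beta> * (f u)\<^sup>2 + \<beta> * (f v)\<^sup>2 - \<eta> * (d x0 u + d x0 v) - l * d u v"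
      unfolding P_def F1_def F2_def by (simp add: algebra_simps)
    moreover have "0 \<le> l * d u v"
      using \<open>l \<ge> 0\<close> by simp
    ultimately show ?thesis
      using bounded[of u] bounded[of v] square_le[of u] square_le[of v] by linarith
  qed
  then obtain x y where maximizer: "\<And>u v. P u v \<le> P x y"
    using pair_attains_max[OF \<open>\<eta> > 0\<close>] by metis
  have "P x0 y0 \<ge> a / 2"
  proof -
    have "P x0 y0 = f y0 - f x0 + \<beta> * (f x0)\<^sup>2 + \<beta> * (f y0)\<^sup>2 - \<eta> * d x0 y0 - l * d x0 y0"
      unfolding P_def F1_def F2_def by (simp add: algebra_simps)
    moreover have "0 \<le> \<beta> * (f x0)\<^sup>2" and "0 \<le> \<beta> * (f y0)\<^sup>2"
      using \<open>\<beta> \<ge> 0\<close> by simp_all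
    ultimately show ?thesis
      using \<open>a \<le> f y0 - f x0\<close> \<open>4 * \<eta> * d x0 y0 \<le> a\<close> \<open>4 * l * d x0 y0 \<le> a\<close> by linarith
  qed
  have diagonal: "P z z \<le> a / 4" for z
  proof -
    have "P z z = 2 * (\<beta> * (f z)\<^sup>2) - 2 * (\<eta> * d x0 z)"
      unfolding P_def F1_def F2_def by simp
    moreover have "0 \<le> \<eta> * d x0 z"
      using \<open>\<eta> > 0\<close> by simp
    ultimately show ?thesis
      using square_le[of z] by linarith
  qed
  have "x \<noteq> y"
    using \<open>P x0 y0 \<ge> a / 2\<close> maximizer[of x0 y0] diagonal[of x] \<open>a > 0\<close> by force
  with maximizer show ?thesis
    using that unfolding P_def by blast
qed

end

locale nonneg_curved_graph = connected_symmetric_graph +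
  assumes nonneg_curv: "nonneg_curvature q"
begin

lemma laplacian_le_of_lipschitz_extremal:
  assumes "x \<noteq> y" and "\<And>a b. \<bar>g a - g b\<bar> \<le> d a b" and "g y - g x = d x y"
  shows "laplacian q g y \<le> laplacian q g x"
proof -
  have "(0::ereal) \<le> ollivier_curvature q x y"
    using nonneg_curv assms(1) unfolding nonneg_curvature_def by simp
  also have "\<dots> \<le> ereal (grad q (laplacian q g) x y)"
    by (rule ollivier_curvature_le[OF assms])
  finally have "0 \<le> (laplacian q g x - laplacian q g y) / d x y"
    unfolding grad_def by simp
  then show ?thesis
    using assms(1) gdist_eq_0_iff[of x y] by (simp add: zero_le_divide_iff)
qed

lemma laplacian_gdist_le_center: "laplacian q (d c) z \<le> laplacian q (d c) c"
proof (cases "z = c")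
  case False
  then show ?thesis
    by (intro laplacian_le_of_lipschitz_extremal d_lipschitz) simp_all
qed simp

lemma laplacian_le_at_maximizer:
  assumes "x \<noteq> y" and "l > 0"
    and maximizer: "\<And>u v. F2 v - F1 u - l * d u v \<le> F2 y - F1 x - l * d x y"
  shows "laplacian q F2 y \<le> laplacian q F1 x"
proof -
  (* The envelope g is 1-Lipschitz with g y - g x = d x y, so curvature applies to it; maximality
     of (x, y) squeezes it below F1 / l with contact at x and above the rescaled F2 near y with
     contact at y. *)
  define b where "b v = (F2 v - (F2 y - F1 x - l * d x y)) / l" for v
  define S where "S = insert y {v. q y v > 0}"
  define g where "g = cone_envelope S b"
  have S: "finite S" "S \<noteq> {}"
    using graph unfolding S_def is_graph_def by auto
  have b_below: "b v - d u v \<le> F1 u / l" for u v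
    using maximizer[of v u] \<open>l > 0\<close> unfolding b_def
    by (simp add: pos_divide_le_eq pos_le_divide_eq algebra_simps)
  have b_y: "b y - d x y = F1 x / l"
    unfolding b_def using \<open>l > 0\<close> by (simp add: field_simps)
  have b_le_g: "b u \<le> g u" if "u \<in> S" for u
    using cone_envelope_ge[OF S that, of b u] unfolding g_def by simp
  have g_le: "g u \<le> F1 u / l" for u
    using b_below by (metis cone_envelope_attained[OF S] g_def)
  have g_x: "g x = F1 x / l"
    using g_le[of x] cone_envelope_ge[OF S, of y b x] b_y unfolding g_def S_def by simp
  have g_y: "g y = b y"
  proof (rule antisym)
    obtain v where "g y = b v - d y v"
      using cone_envelope_attained[OF S] unfolding g_def by blast
    then show "g y \<le> b y"
      using b_below[of v x] b_y d_triangle[of x v y] by linarith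
    show "b y \<le> g y"
      using b_le_g unfolding S_def by simp
  qed
  have "laplacian q b y \<le> laplacian q g y"
    using g_y b_le_g unfolding S_def by (intro laplacian_le_of_touching) auto
  also have "\<dots> \<le> laplacian q g x"
    using \<open>x \<noteq> y\<close> cone_envelope_lipschitz[OF S] g_x g_y b_y unfolding g_def
    by (intro laplacian_le_of_lipschitz_extremal) auto
  also have "\<dots> \<le> laplacian q (\<lambda>z. (F1 z - 0) / l) x"
    using g_le g_x by (intro laplacian_le_of_touching) auto
  finally have "laplacian q F2 y / l \<le> laplacian q F1 x / l"
    unfolding b_def laplacian_affine .
  then show ?thesis
    using \<open>l > 0\<close> by (simp add: divide_le_cancel)
qed

subsection \<open>Bounded harmonic functions\<close>

lemma harmonic_perturbation_estimate:
  fixes f :: "'a \<Rightarrow> real" and c :: 'a and \<beta> \<eta> :: real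
  defines "F1 \<equiv> \<lambda>z. f z + (- \<beta>) * (f z)\<^sup>2 + \<eta> * d c z"
    and "F2 \<equiv> \<lambda>z. f z + \<beta> * (f z)\<^sup>2 + (- \<eta>) * d c z"
  assumes harmonic: "\<And>z. laplacian q f z = 0" and bounded: "\<And>z. \<bar>f z\<bar> \<le> B"
    and "\<beta> \<ge> 0" and "\<eta> \<ge> 0" and "\<eta> \<le> l / 2" and "l > 0" and "x \<noteq> y"
    and maximizer: "\<And>u v. F2 v - F1 u - l * d u v \<le> F2 y - F1 x - l * d x y"
  shows "\<beta> * q_min q * (l / (2 * (1 + 2 * \<beta> * B)))\<^sup>2 \<le> 2 * \<eta> * laplacian q (d c) c"
proof -
  let ?sq = "laplacian q (\<lambda>z. (f z)\<^sup>2)"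
  have "laplacian q F2 y \<le> laplacian q F1 x"
    by (rule laplacian_le_at_maximizer[OF \<open>x \<noteq> y\<close> \<open>l > 0\<close> maximizer])
  then have "\<beta> * ?sq y + \<beta> * ?sq x \<le> \<eta> * (laplacian q (d c) x + laplacian q (d c) y)"
    unfolding F1_def F2_def laplacian_add_scaled harmonic by (simp add: algebra_simps)
  also have "\<dots> \<le> \<eta> * (2 * laplacian q (d c) c)"
    using laplacian_gdist_le_center[of c x] laplacian_gdist_le_center[of c y] \<open>\<eta> \<ge> 0\<close>
    by (intro mult_left_mono) auto
  moreover have "0 \<le> \<beta> * ?sq x"
    using laplacian_square_harmonic_nonneg[OF harmonic] \<open>\<beta> \<ge> 0\<close> by simp
  ultimately have upper: "\<beta> * ?sq y \<le> \<eta> * (2 * laplacian q (d c) c)"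
    by linarith
  obtain v where "q y v > 0" and steep: "l \<le> F2 y - F2 v"
    using maximizer_steep_edge[OF \<open>x \<noteq> y\<close> _ maximizer] \<open>l > 0\<close> by auto
  have "gdist q c v \<le> gdist q c y + 1"
    using gdist_triangle[of c v y] gdist_edge[OF \<open>q y v > 0\<close>] by simp
  then have "d c v - d c y \<le> 1"
    by linarith
  then have "l / (2 * (1 + 2 * \<beta> * B)) \<le> \<bar>f y - f v\<bar>"
    using steep bounded \<open>\<beta> \<ge> 0\<close> \<open>\<eta> \<ge> 0\<close> \<open>\<eta> \<le> l / 2\<close> unfolding F2_def
    by (intro increment_lower_bound) auto
  moreover have "0 \<le> l / (2 * (1 + 2 * \<beta> * B))"
    using abs_ge_zero[of "f y"] bounded[of y] \<open>l > 0\<close> \<open>\<beta> \<ge> 0\<close> by simp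
  ultimately have "(l / (2 * (1 + 2 * \<beta> * B)))\<^sup>2 \<le> (f v - f y)\<^sup>2"
    by (metis abs_minus_commute power2_abs power_mono)
  then have "q_min q * (l / (2 * (1 + 2 * \<beta> * B)))\<^sup>2 \<le> q y v * (f v - f y)\<^sup>2"
    using q_min_le[of q y v] \<open>q y v > 0\<close> by (intro mult_mono) auto
  also have "\<dots> \<le> ?sq y"
    by (rule laplacian_square_harmonic_ge_edge[OF graph harmonic \<open>q y v > 0\<close>])
  finally have "\<beta> * (q_min q * (l / (2 * (1 + 2 * \<beta> * B)))\<^sup>2) \<le> \<beta> * ?sq y"
    using \<open>\<beta> \<ge> 0\<close> by (intro mult_left_mono)
  with upper show ?thesis
    by (simp add: mult.assoc mult.left_commute)
qed

lemma perturbed_maximum_bound: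
  fixes f :: "'a \<Rightarrow> real"
  assumes harmonic: "\<And>z. laplacian q f z = 0" and bounded: "\<And>z. \<bar>f z\<bar> \<le> B"
    and "0 < a" and "a \<le> f y0 - f x0"
    and "\<beta> \<ge> 0" and "8 * \<beta> * B\<^sup>2 \<le> a" and "l > 0" and "4 * l * d x0 y0 \<le> a"
    and "\<eta> > 0" and "\<eta> \<le> l / 2" and "4 * \<eta> * d x0 y0 \<le> a"
  shows "\<beta> * q_min q * (l / (2 * (1 + 2 * \<beta> * B)))\<^sup>2 \<le> 2 * \<eta> * laplacian q (d x0) x0"
proof -
  define F1 where "F1 = (\<lambda>z. f z + (- \<beta>) * (f z)\<^sup>2 + \<eta> * d x0 z)"
  define F2 where "F2 = (\<lambda>z. f z + \<beta> * (f z)\<^sup>2 + (- \<eta>) * d x0 z)"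
  obtain x y where "x \<noteq> y"
    and maximizer: "\<And>u v. F2 v - F1 u - l * d u v \<le> F2 y - F1 x - l * d x y"
    unfolding F1_def F2_def
    by (rule exists_perturbed_maximizer[OF bounded \<open>0 < a\<close> \<open>a \<le> f y0 - f x0\<close> \<open>\<beta> \<ge> 0\<close>
          \<open>8 * \<beta> * B\<^sup>2 \<le> a\<close> \<open>\<eta> > 0\<close> \<open>4 * \<eta> * d x0 y0 \<le> a\<close> _ \<open>4 * l * d x0 y0 \<le> a\<close>])
      (use \<open>l > 0\<close> in auto)
  then show ?thesis
    using harmonic_perturbation_estimate[OF harmonic bounded, of \<beta> \<eta> l x y x0] assms(5,7,9,10)
    unfolding F1_def F2_def by simp
qed

lemma bounded_harmonic_le:
  fixes f :: "'a \<Rightarrow> real"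
  assumes "q_min q > 0" and harmonic: "\<And>z. laplacian q f z = 0" and bounded: "\<And>z. \<bar>f z\<bar> \<le> B"
  shows "f y0 \<le> f x0"
proof (rule ccontr)
  assume "\<not> f y0 \<le> f x0"
  define a where "a = f y0 - f x0"
  have "a > 0" and "B > 0" and "x0 \<noteq> y0"
    using \<open>\<not> f y0 \<le> f x0\<close> bounded[of x0] bounded[of y0] unfolding a_def by auto
  then have "d x0 y0 \<ge> 1"
    using gdist_eq_0_iff[of x0 y0] by simp
  define l where "l = a / (4 * d x0 y0)"
  have "l > 0" and "4 * l * d x0 y0 \<le> a"
    unfolding l_def using \<open>a > 0\<close> \<open>d x0 y0 \<ge> 1\<close> by auto
  define \<beta> where "\<beta> = a / (8 * B\<^sup>2)"
  have "\<beta> > 0" and "8 * \<beta> * B\<^sup>2 \<le> a"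
    unfolding \<beta>_def using \<open>a > 0\<close> \<open>B > 0\<close> by auto
  define K where "K = \<beta> * q_min q * (l / (2 * (1 + 2 * \<beta> * B)))\<^sup>2"
  have "K > 0"
    unfolding K_def using \<open>\<beta> > 0\<close> \<open>q_min q > 0\<close> \<open>l > 0\<close> \<open>B > 0\<close>
    by (intro mult_pos_pos zero_less_power divide_pos_pos) (simp_all add: add_pos_pos)
  define D where "D = laplacian q (d x0) x0"
  define \<eta> where "\<eta> = Min {a / (4 * d x0 y0), l / 2, K / (2 * \<bar>D\<bar> + 1)}"
  have \<eta>_le: "\<eta> \<le> a / (4 * d x0 y0)" "\<eta> \<le> l / 2" "\<eta> \<le> K / (2 * \<bar>D\<bar> + 1)"
    unfolding \<eta>_def by (intro Min_le; simp)+
  have "\<eta> > 0"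
    using \<open>a > 0\<close> \<open>l > 0\<close> \<open>K > 0\<close> \<open>d x0 y0 \<ge> 1\<close> unfolding \<eta>_def by simp
  have "4 * \<eta> * d x0 y0 \<le> a"
    using \<eta>_le(1) \<open>d x0 y0 \<ge> 1\<close> by (simp add: le_divide_eq algebra_simps)
  have "K \<le> 2 * \<eta> * D"
    unfolding K_def D_def using \<eta>_le(2) \<open>\<beta> > 0\<close>
    by (intro perturbed_maximum_bound[OF harmonic bounded \<open>a > 0\<close> _ _ \<open>8 * \<beta> * B\<^sup>2 \<le> a\<close> \<open>l > 0\<close>
          \<open>4 * l * d x0 y0 \<le> a\<close> \<open>\<eta> > 0\<close> _ \<open>4 * \<eta> * d x0 y0 \<le> a\<close>]) (simp_all add: a_def)
  moreover have "\<eta> * (2 * \<bar>D\<bar> + 1) \<le> K"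
    using \<eta>_le(3) by (simp add: le_divide_eq)
  moreover have "\<eta> * D \<le> \<eta> * \<bar>D\<bar>"
    using \<open>\<eta> > 0\<close> by (intro mult_left_mono) auto
  moreover have "\<eta> * (2 * \<bar>D\<bar> + 1) = 2 * (\<eta> * \<bar>D\<bar>) + \<eta>" and "2 * \<eta> * D = 2 * (\<eta> * D)"
    by (simp_all add: algebra_simps)
  ultimately show False
    using \<open>\<eta> > 0\<close> by linarith
qed

end

theorem mainTheorem15:
  fixes q :: "'a::countable \<Rightarrow> 'a \<Rightarrow> real" and \<phi> :: "'a \<Rightarrow> real"
  assumes "is_graph q" and "reversible q" and "connected_graph q"
    and "nonneg_curvature q" and "q_min q > 0"
    and "\<exists>C. \<forall>x. \<bar>\<phi> x\<bar> \<le> C"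
    and "\<forall>x. laplacian q \<phi> x = 0"
  shows "\<exists>c. \<forall>x. \<phi> x = c"
proof -
  interpret nonneg_curved_graph q
    using assms(1-4) reversible_imp_sym_support by unfold_locales auto
  obtain C where "\<And>x. \<bar>\<phi> x\<bar> \<le> C"
    using assms(6) by blast
  then have "\<phi> y \<le> \<phi> x" for x y
    using bounded_harmonic_le[OF assms(5)] assms(7) by blast
  then show ?thesis
    by (metis order_antisym)
qed

end
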